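(* Let $(l,k,b)$ be a suspension triplet for $(X_A,\sigma_A)$ and $c=l-k$. Then the zeta function of the flow $\phi_A$ of the one-sided suspension $(S^{l,k}_{A,b},\phi_A)$, $$\zeta_{\phi_A}(s)=\prod_{\tau\in P_{orb}(S^{l,k}_{A,b},\phi_A)}(1-e^{-s\ell(\tau)})^{-1},$$ equals the dynamical zeta function $$\zeta_{A,c}(s)=\exp\Big\{\sum_{n=1}^\infty\frac1n\sum_{x\in\mathrm{Per}_n(X_A)}\exp\Big(-s\sum_{i=0}^{n-1}c(\sigma_A^i(x))\Big)\Big\},$$ where $\mathrm{Per}_n(X_A)=\{x\in X_A:\sigma_A^n(x)=x\}$ (for $s\in\mathbb C$ with sufficiently large real part).
   Context: Let $N>1$ and $A=[A(i,j)]_{i,j=1}^N$ an irreducible $\{0,1\}$-matrix which is not a permutation matrix. $X_A$ is the compact space of sequences $(x_n)_{n\in\mathbb N}$ with $x_n\in\{1,\dots,N\}$ and $A(x_n,x_{n+1})=1$ for all $n$, and $\sigma_A((x_n)_n)=(x_{n+1})_n$. $\mathbb Z_+$, $\mathbb R_+$ are nonnegative integers/reals. $H^A$ is the quotient of $C(X_A,\mathbb Z)$ by $\{u-u\circ\sigma_A: u\in C(X_A,\mathbb Z)\}$, $H^A_+=\{[f]: f\in C(X_A,\mathbb Z_+)\}$; $[f]\in H^A_+$ is an order unit if for every $[u]\in H^A$ there is $n\in\mathbb N$ with $n[f]-[u]\in H^A_+$. A suspension triplet is $(l,k,b)$ with $l,k\in C(X_A,\mathbb R_+)$, $b\in C(X_A,\mathbb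 R)$ such that $c=l-k$ is integer-valued with $[c]$ an order unit, and $l-b$, $k-b\circ\sigma_A$ take values in $\mathbb Z_+$. $S^{l,k}_{A,b}$ is the quotient of $\{(x,r)\in X_A\times\mathbb R: r\ge b(x)\}$ by the equivalence relation generated by $(x,r)\sim(\sigma_A(x),r-c(x))$ whenever $r\ge l(x)$; $[x,r]$ denotes classes, and $\phi_{A,t}([x,r])=[x,r+t]$, $t\in\mathbb R_+$, is its flow. A periodic orbit of the flow is a set $\tau=\{\phi_{A,t}(u):t\in\mathbb R_+\}$ for a point $u$ with $\phi_{A,T}(u)=u$ for some $T>0$; $P_{orb}(S^{l,k}_{A,b},\phi_A)$ is the set of these, and $\ell(\tau)=\min\{t>0:\phi_{A,t}(u)=u\}$ for $u\in\tau$. *)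

theory Defs
  imports "HOL-Analysis.Analysis" "HOL-Combinatorics.Permutations"
begin

text \<open>Matrices are functions nat => nat => nat, indexed by 1..N.\<close>

fun mpow :: "nat \<Rightarrow> (nat \<Rightarrow> nat \<Rightarrow> nat) \<Rightarrow> nat \<Rightarrow> nat \<Rightarrow> nat \<Rightarrow> nat" where
  "mpow N A 0 i j = (if i = j then 1 else 0)"
| "mpow N A (Suc n) i j = (\<Sum>m\<in>{1..N}. mpow N A n i m * A m j)"

definition zero_one_matrix :: "nat \<Rightarrow> (nat \<Rightarrow> nat \<Rightarrow> nat) \<Rightarrow> bool" where
  "zero_one_matrix N A \<longleftrightarrow> (\<forall>i\<in>{1..N}. \<forall>j\<in>{1..N}. A i j \<in> {0, 1})"

definition irreducible_matrix :: "nat \<Rightarrow> (nat \<Rightarrow> nat \<Rightarrow> nat) \<Rightarrow> bool" where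
  "irreducible_matrix N A \<longleftrightarrow> (\<forall>i\<in>{1..N}. \<forall>j\<in>{1..N}. \<exists>n>0. mpow N A n i j > 0)"

definition permutation_matrix :: "nat \<Rightarrow> (nat \<Rightarrow> nat \<Rightarrow> nat) \<Rightarrow> bool" where
  "permutation_matrix N A \<longleftrightarrow>
     (\<exists>p. p permutes {1..N} \<and> (\<forall>i\<in>{1..N}. \<forall>j\<in>{1..N}. A i j = (if p i = j then 1 else 0)))"

text \<open>The one-sided shift space X_A (sequences indexed from 0), with the product topology
  inherited from the library instance on nat => nat (nat carries the discrete topology).\<close>

definition XA :: "nat \<Rightarrow> (nat \<Rightarrow> nat \<Rightarrow> nat) \<Rightarrow> (nat \<Rightarrow> nat) set" where
  "XA N A = {x. (\<forall>n. x n \<in> {1..N}) \<and> (\<forall>n. A (x n) (x (Suc n)) = 1)}"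

definition shift :: "(nat \<Rightarrow> nat) \<Rightarrow> (nat \<Rightarrow> nat)" where
  "shift x = (\<lambda>n. x (Suc n))"

definition Per :: "nat \<Rightarrow> (nat \<Rightarrow> nat \<Rightarrow> nat) \<Rightarrow> nat \<Rightarrow> (nat \<Rightarrow> nat) set" where
  "Per N A n = {x \<in> XA N A. (shift ^^ n) x = x}"

text \<open>C(X_A, Z), realised as real-valued continuous functions on X_A taking integer values.\<close>
definition cont_Z :: "nat \<Rightarrow> (nat \<Rightarrow> nat \<Rightarrow> nat) \<Rightarrow> ((nat \<Rightarrow> nat) \<Rightarrow> real) \<Rightarrow> bool" where
  "cont_Z N A u \<longleftrightarrow> continuous_on (XA N A) u \<and> (\<forall>x\<in>XA N A. u x \<in> \<int>)"

definition cont_Zplus :: "nat \<Rightarrow> (nat \<Rightarrow> nat \<Rightarrow> nat) \<Rightarrow> ((nat \<Rightarrow> nat) \<Rightarrow> real) \<Rightarrow> bool" where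
  "cont_Zplus N A u \<longleftrightarrow> cont_Z N A u \<and> (\<forall>x\<in>XA N A. u x \<ge> 0)"

text \<open>[f] = [g] in H^A: f - g = v - v o sigma_A on X_A for some v in C(X_A,Z).\<close>
definition cohomologous :: "nat \<Rightarrow> (nat \<Rightarrow> nat \<Rightarrow> nat) \<Rightarrow> ((nat \<Rightarrow> nat) \<Rightarrow> real) \<Rightarrow> ((nat \<Rightarrow> nat) \<Rightarrow> real) \<Rightarrow> bool" where
  "cohomologous N A f g \<longleftrightarrow>
     (\<exists>v. cont_Z N A v \<and> (\<forall>x\<in>XA N A. f x - g x = v x - v (shift x)))"

definition in_HA_plus :: "nat \<Rightarrow> (nat \<Rightarrow> nat \<Rightarrow> nat) \<Rightarrow> ((nat \<Rightarrow> nat) \<Rightarrow> real) \<Rightarrow> bool" where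
  "in_HA_plus N A f \<longleftrightarrow> (\<exists>g. cont_Zplus N A g \<and> cohomologous N A f g)"

definition order_unit :: "nat \<Rightarrow> (nat \<Rightarrow> nat \<Rightarrow> nat) \<Rightarrow> ((nat \<Rightarrow> nat) \<Rightarrow> real) \<Rightarrow> bool" where
  "order_unit N A f \<longleftrightarrow> cont_Z N A f \<and> in_HA_plus N A f \<and>
     (\<forall>u. cont_Z N A u \<longrightarrow> (\<exists>n::nat. in_HA_plus N A (\<lambda>x. real n * f x - u x)))"

definition suspension_triplet ::
  "nat \<Rightarrow> (nat \<Rightarrow> nat \<Rightarrow> nat) \<Rightarrow> ((nat \<Rightarrow> nat) \<Rightarrow> real) \<Rightarrow> ((nat \<Rightarrow> nat) \<Rightarrow> real)
     \<Rightarrow> ((nat \<Rightarrow> nat) \<Rightarrow> real) \<Rightarrow> bool" where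
  "suspension_triplet N A l k b \<longleftrightarrow>
     continuous_on (XA N A) l \<and> continuous_on (XA N A) k \<and> continuous_on (XA N A) b \<and>
     (\<forall>x\<in>XA N A. l x \<ge> 0 \<and> k x \<ge> 0) \<and>
     (\<forall>x\<in>XA N A. l x - k x \<in> \<int>) \<and>
     order_unit N A (\<lambda>x. l x - k x) \<and>
     (\<forall>x\<in>XA N A. l x - b x \<in> \<int> \<and> l x - b x \<ge> 0) \<and>
     (\<forall>x\<in>XA N A. k x - b (shift x) \<in> \<int> \<and> k x - b (shift x) \<ge> 0)"

definition susp_dom :: "nat \<Rightarrow> (nat \<Rightarrow> nat \<Rightarrow> nat) \<Rightarrow> ((nat \<Rightarrow> nat) \<Rightarrow> real) \<Rightarrow> ((nat \<Rightarrow> nat) \<times> real) set" where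
  "susp_dom N A b = {(x, r). x \<in> XA N A \<and> r \<ge> b x}"

definition susp_step ::
  "nat \<Rightarrow> (nat \<Rightarrow> nat \<Rightarrow> nat) \<Rightarrow> ((nat \<Rightarrow> nat) \<Rightarrow> real) \<Rightarrow> ((nat \<Rightarrow> nat) \<Rightarrow> real)
     \<Rightarrow> ((nat \<Rightarrow> nat) \<Rightarrow> real) \<Rightarrow> (((nat \<Rightarrow> nat) \<times> real) \<times> ((nat \<Rightarrow> nat) \<times> real)) set" where
  "susp_step N A l k b =
     {((x, r), (shift x, r - (l x - k x))) | x r. (x, r) \<in> susp_dom N A b \<and> r \<ge> l x}"

definition susp_rel ::
  "nat \<Rightarrow> (nat \<Rightarrow> nat \<Rightarrow> nat) \<Rightarrow> ((nat \<Rightarrow> nat) \<Rightarrow> real) \<Rightarrow> ((nat \<Rightarrow> nat) \<Rightarrow> real)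
     \<Rightarrow> ((nat \<Rightarrow> nat) \<Rightarrow> real) \<Rightarrow> (((nat \<Rightarrow> nat) \<times> real) \<times> ((nat \<Rightarrow> nat) \<times> real)) set" where
  "susp_rel N A l k b =
     ((susp_step N A l k b \<union> (susp_step N A l k b)\<inverse>)\<^sup>*) \<inter> (susp_dom N A b \<times> susp_dom N A b)"

definition susp_space ::
  "nat \<Rightarrow> (nat \<Rightarrow> nat \<Rightarrow> nat) \<Rightarrow> ((nat \<Rightarrow> nat) \<Rightarrow> real) \<Rightarrow> ((nat \<Rightarrow> nat) \<Rightarrow> real)
     \<Rightarrow> ((nat \<Rightarrow> nat) \<Rightarrow> real) \<Rightarrow> ((nat \<Rightarrow> nat) \<times> real) set set" where
  "susp_space N A l k b = susp_dom N A b // susp_rel N A l k b"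

definition susp_flow ::
  "nat \<Rightarrow> (nat \<Rightarrow> nat \<Rightarrow> nat) \<Rightarrow> ((nat \<Rightarrow> nat) \<Rightarrow> real) \<Rightarrow> ((nat \<Rightarrow> nat) \<Rightarrow> real)
     \<Rightarrow> ((nat \<Rightarrow> nat) \<Rightarrow> real) \<Rightarrow> real \<Rightarrow> ((nat \<Rightarrow> nat) \<times> real) set \<Rightarrow> ((nat \<Rightarrow> nat) \<times> real) set" where
  "susp_flow N A l k b t P = susp_rel N A l k b `` ((\<lambda>(x, r). (x, r + t)) ` P)"

definition periodic_orbits ::
  "nat \<Rightarrow> (nat \<Rightarrow> nat \<Rightarrow> nat) \<Rightarrow> ((nat \<Rightarrow> nat) \<Rightarrow> real) \<Rightarrow> ((nat \<Rightarrow> nat) \<Rightarrow> real)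
     \<Rightarrow> ((nat \<Rightarrow> nat) \<Rightarrow> real) \<Rightarrow> ((nat \<Rightarrow> nat) \<times> real) set set set" where
  "periodic_orbits N A l k b =
     {\<tau>. \<exists>u\<in>susp_space N A l k b. (\<exists>T>0. susp_flow N A l k b T u = u) \<and>
          \<tau> = {susp_flow N A l k b t u | t. t \<ge> 0}}"

definition orbit_length ::
  "nat \<Rightarrow> (nat \<Rightarrow> nat \<Rightarrow> nat) \<Rightarrow> ((nat \<Rightarrow> nat) \<Rightarrow> real) \<Rightarrow> ((nat \<Rightarrow> nat) \<Rightarrow> real)
     \<Rightarrow> ((nat \<Rightarrow> nat) \<Rightarrow> real) \<Rightarrow> ((nat \<Rightarrow> nat) \<times> real) set set \<Rightarrow> real" where
  "orbit_length N A l k b \<tau> =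
     (let u = (SOME u. u \<in> \<tau>) in Inf {t. t > 0 \<and> susp_flow N A l k b t u = u})"

end

theory Submission
  imports Defs "HOL-Combinatorics.Orbits"
begin

(*
  For large r, a point [x, r] of the suspension is periodic under the flow exactly when x is
  periodic under the shift; if p is the least period of x, the least period of [x, r] is the
  Birkhoff sum c_p(x), and two such points lie on one flow orbit iff x and y lie on one shift
  orbit.  So periodic flow orbits correspond to shift orbits of periodic points, with length
  c_p(x) > 0 because [c] is an order unit (which gives c_p(x) >= p / M for some M).
  Expanding -log (1 - e^(-s c_p(x))) = sum_j e^(-s (j+1) c_p(x)) / (j+1) and spreading each
  term evenly over the p points of the orbit produces exactly the terms e^(-s c_n(y)) / n with
  y in Per_n and n = (j+1) p.  For Re s > M log N the double series converges absolutely,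
  since |Per_n| <= N^n, which justifies the rearrangement; exponentiating gives the product.
*)

section \<open>Iterates and Birkhoff sums\<close>

lemma funpow_add_apply: "(f ^^ (m + n)) x = (f ^^ n) ((f ^^ m) x)"
  by (metis add.commute comp_apply funpow_add)

lemma funpow_mult_fixpoint: "(f ^^ p) x = x \<Longrightarrow> (f ^^ (j * p)) x = x"
  by (induction j) (simp_all add: funpow_add)

definition birkhoff_sum :: "('a \<Rightarrow> 'a) \<Rightarrow> ('a \<Rightarrow> real) \<Rightarrow> nat \<Rightarrow> 'a \<Rightarrow> real" where
  "birkhoff_sum f g n x = (\<Sum>i<n. g ((f ^^ i) x))"

lemma birkhoff_sum_0 [simp]: "birkhoff_sum f g 0 x = 0"
  by (simp add: birkhoff_sum_def)

lemma birkhoff_sum_Suc: "birkhoff_sum f g (Suc n) x = birkhoff_sum f g n x + g ((f ^^ n) x)"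
  by (simp add: birkhoff_sum_def)

lemma birkhoff_sum_add:
  "birkhoff_sum f g (m + n) x = birkhoff_sum f g m x + birkhoff_sum f g n ((f ^^ m) x)"
  by (induction n) (simp_all add: birkhoff_sum_Suc funpow_add_apply)

lemma birkhoff_sum_periodic_mult:
  assumes "(f ^^ p) x = x"
  shows "birkhoff_sum f g (j * p) x = real j * birkhoff_sum f g p x"
proof (induction j)
  case (Suc j)
  then show ?case
    using birkhoff_sum_add[of f g "j * p" p x] funpow_mult_fixpoint[OF assms, of j]
    by (simp add: algebra_simps)
qed simp

lemma birkhoff_sum_periodic_shift:
  assumes "(f ^^ p) x = x"
  shows "birkhoff_sum f g p ((f ^^ m) x) = birkhoff_sum f g p x"
  using birkhoff_sum_add[of f g m p x] birkhoff_sum_add[of f g p m x] assms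
  by (simp add: add.commute)

lemma birkhoff_sum_periodic_add:
  assumes "(f ^^ p) x = x"
  shows "birkhoff_sum f g (m + j * p) x = birkhoff_sum f g m x + real j * birkhoff_sum f g p x"
proof -
  have "(f ^^ p) ((f ^^ m) x) = (f ^^ m) x"
    using assms by (metis funpow_add_apply add.commute)
  then show ?thesis
    using birkhoff_sum_periodic_shift[OF assms]
    by (simp add: birkhoff_sum_add birkhoff_sum_periodic_mult)
qed

lemma birkhoff_sum_coboundary_periodic:
  assumes "(f ^^ p) x = x"
  shows "birkhoff_sum f (\<lambda>y. v y - v (f y)) p x = 0"
  using sum_lessThan_telescope[of "\<lambda>i. v ((f ^^ i) x)" p] assms
  by (simp add: birkhoff_sum_def sum_subtractf)


section \<open>Least periods\<close>

text \<open>The library's \<open>orbit f x\<close> is \<open>{(f ^^ n) x | n. 0 < n}\<close>, so \<open>x \<in> orbit f x\<close> says that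
  \<open>x\<close> is periodic.\<close>

definition least_period :: "('a \<Rightarrow> 'a) \<Rightarrow> 'a \<Rightarrow> nat" where
  "least_period f x = funpow_dist1 f x x"

lemma least_period_pos [simp]: "0 < least_period f x"
  by (simp add: least_period_def)

lemma self_in_orbitI: "(f ^^ n) x = x \<Longrightarrow> 0 < n \<Longrightarrow> x \<in> orbit f x"
  unfolding orbit_altdef by (auto intro!: exI[of _ n])

lemma funpow_least_period: "x \<in> orbit f x \<Longrightarrow> (f ^^ least_period f x) x = x"
  unfolding least_period_def by (rule funpow_dist1_prop)

lemma least_period_dvd:
  assumes "(f ^^ n) x = x"
  shows "least_period f x dvd n"
proof (cases "n = 0")
  case False
  let ?p = "least_period f x"
  have "(f ^^ ?p) x = x"
    using funpow_dist1_prop1[OF assms] False by (simp add: least_period_def)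
  then have "(f ^^ (n mod ?p)) x = x"
    using assms by (simp add: funpow_mod_eq)
  then have "n mod ?p = 0"
    using funpow_dist1_least[where n="n mod ?p" and f=f and x=x and y=x] False
    by (fastforce simp: least_period_def)
  then show ?thesis by auto
qed simp

lemma funpow_eq_imp_least_period_dvd:
  assumes "x \<in> orbit f x" "(f ^^ m) x = (f ^^ n) x" "n \<le> m"
  shows "least_period f x dvd m - n"
proof -
  let ?p = "least_period f x"
  have "n \<le> n * ?p" by (simp add: Suc_le_eq)
  then have "(f ^^ (m - n + n * ?p)) x = (f ^^ (n * ?p - n)) ((f ^^ m) x)"
    using assms(3) funpow_add_apply[where f=f and m=m and n="n * ?p - n"] by (simp add: add.commute)
  also have "\<dots> = (f ^^ (n * ?p)) x"
    using \<open>n \<le> n * ?p\<close> funpow_add_apply[where f=f and m=n and n="n * ?p - n"] by (simp add: assms(2))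
  also have "\<dots> = x"
    by (rule funpow_mult_fixpoint[OF funpow_least_period[OF assms(1)]])
  finally have "?p dvd m - n + n * ?p" by (rule least_period_dvd)
  then show ?thesis by (simp only: dvd_add_times_triv_right_iff)
qed

lemma least_period_funpow:
  assumes "x \<in> orbit f x"
  shows "least_period f ((f ^^ i) x) = least_period f x"
proof (rule dvd_antisym)
  let ?y = "(f ^^ i) x"
  have "?y \<in> orbit f x" by (rule funpow_in_orbit[OF assms])
  have "x \<in> orbit f ?y" by (rule orbit_swap[OF assms \<open>?y \<in> orbit f x\<close>])
  then obtain j where j: "x = (f ^^ j) ?y" unfolding orbit_altdef by blast
  have y_periodic: "?y \<in> orbit f ?y"
    using self_in_orbit_trans[OF assms \<open>?y \<in> orbit f x\<close>] .
  have "(f ^^ least_period f x) ?y = ?y"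
    using funpow_least_period[OF assms] by (metis funpow_add_apply add.commute)
  then show "least_period f ?y dvd least_period f x" by (rule least_period_dvd)
  have "(f ^^ least_period f ?y) x = x"
    using funpow_least_period[OF y_periodic] j[symmetric] by (metis funpow_add_apply add.commute)
  then show "least_period f x dvd least_period f ?y" by (rule least_period_dvd)
qed

lemma funpow_eq_imp_periodic:
  assumes "(f ^^ m) x = (f ^^ n) x" "m \<noteq> n"
  shows "(f ^^ min m n) x \<in> orbit f ((f ^^ min m n) x)"
proof -
  have "(f ^^ (max m n - min m n)) ((f ^^ min m n) x) = (f ^^ min m n) x"
    using assms(1) funpow_add_apply[where f=f and m="min m n" and n="max m n - min m n"]
    by (cases "m \<le> n") (simp_all add: min_def max_def)
  moreover have "max m n - min m n > 0" using assms(2) by simp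
  ultimately show ?thesis by (rule self_in_orbitI)
qed

lemma card_orbit_eq_least_period:
  assumes "x \<in> orbit f x"
  shows "card (orbit f x) = least_period f x"
  using orbit_conv_funpow_dist1[OF assms] inj_on_funpow_dist1[OF assms]
  by (simp add: card_image least_period_def)


section \<open>The logarithmic series\<close>

lemma has_sum_minus_ln_one_minus:
  fixes z :: complex
  assumes "norm z < 1"
  shows "((\<lambda>j. z ^ Suc j / of_nat (Suc j)) has_sum - ln (1 - z)) UNIV"
proof (rule norm_summable_imp_has_sum)
  have "(\<lambda>n. - ((- (- z)) ^ n) / of_nat n) sums ln (1 + - z)"
    using Ln_series'[of "- z"] assms by simp
  then have "(\<lambda>n. z ^ n / of_nat n) sums - ln (1 - z)"
    using sums_minus by fastforce
  then show "(\<lambda>j. z ^ Suc j / of_nat (Suc j)) sums - ln (1 - z)"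
    by (subst sums_Suc_iff) simp
  have bound: "norm (z ^ Suc j / of_nat (Suc j)) \<le> norm z ^ Suc j" for j
  proof -
    have "norm (z ^ Suc j / of_nat (Suc j)) = norm z ^ Suc j / real (Suc j)"
      by (simp only: norm_divide norm_power norm_of_nat)
    also have "\<dots> \<le> norm z ^ Suc j / 1"
      by (rule divide_left_mono) simp_all
    finally show ?thesis by simp
  qed
  have "summable (\<lambda>j. norm z ^ Suc j)"
    using assms by (simp add: summable_geometric)
  then show "summable (\<lambda>j. norm (z ^ Suc j / of_nat (Suc j)))"
    using bound summable_norm_comparison_test[of "\<lambda>j. z ^ Suc j / of_nat (Suc j)" "\<lambda>j. norm z ^ Suc j"]
    by blast
qed

lemma exp_minus_ln_one_minus:
  fixes z :: complex
  assumes "norm z < 1"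
  shows "exp (- ln (1 - z)) = inverse (1 - z)"
proof -
  have "1 - z \<noteq> 0" using assms by auto
  then show ?thesis by (simp add: exp_minus)
qed


section \<open>The shift space\<close>

lemma shift_in_XA: "x \<in> XA N A \<Longrightarrow> shift x \<in> XA N A"
  by (auto simp: XA_def shift_def)

lemma funpow_shift_in_XA: "x \<in> XA N A \<Longrightarrow> (shift ^^ n) x \<in> XA N A"
  by (induction n) (auto simp: shift_in_XA)

lemma funpow_shift: "(shift ^^ n) x = (\<lambda>m. x (m + n))"
  by (induction n arbitrary: x) (auto simp: shift_def funpow_Suc_right)

lemma Per_finite_card:
  assumes "n > 0"
  shows "finite (Per N A n)" "card (Per N A n) \<le> N ^ n"
proof -
  let ?words = "{w. set w \<subseteq> {1..N} \<and> length w = n}"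
  let ?prefix = "\<lambda>x. map x [0..<n]"
  have mod_period: "x m = x (m mod n)" if "x \<in> Per N A n" for x m
  proof -
    have "x m = (shift ^^ m) x 0" by (simp add: funpow_shift)
    also have "\<dots> = (shift ^^ (m mod n)) x 0"
      using that by (simp add: Per_def funpow_mod_eq)
    finally show ?thesis by (simp add: funpow_shift)
  qed
  have inj: "inj_on ?prefix (Per N A n)"
  proof (rule inj_onI, rule ext)
    fix x y m assume x: "x \<in> Per N A n" and y: "y \<in> Per N A n" and eq: "?prefix x = ?prefix y"
    have "x (m mod n) = y (m mod n)"
      using arg_cong[OF eq, of "\<lambda>w. w ! (m mod n)"] assms by simp
    then show "x m = y m" using mod_period[OF x, of m] mod_period[OF y, of m] by simp
  qed
  have words: "?prefix ` Per N A n \<subseteq> ?words"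
    by (auto simp: Per_def XA_def)
  have "finite ?words" "card ?words = N ^ n"
    by (simp_all add: finite_lists_length_eq card_lists_length_eq)
  then show "finite (Per N A n)" "card (Per N A n) \<le> N ^ n"
    using finite_imageD[OF finite_subset[OF words] inj] card_inj_on_le[OF inj words] by simp_all
qed

lemma order_unit_birkhoff_sum_bound:
  assumes "order_unit N A c"
  obtains M :: nat where "M > 0"
    and "\<And>x p. x \<in> XA N A \<Longrightarrow> (shift ^^ p) x = x \<Longrightarrow> real p \<le> real M * birkhoff_sum shift c p x"
proof -
  have "cont_Z N A (\<lambda>_. 1)" by (simp add: cont_Z_def)
  then obtain n :: nat where "in_HA_plus N A (\<lambda>x. real n * c x - 1)"
    using assms unfolding order_unit_def by blast
  then obtain g v where g: "\<And>x. x \<in> XA N A \<Longrightarrow> g x \<ge> 0"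
    and v: "\<And>x. x \<in> XA N A \<Longrightarrow> (real n * c x - 1) - g x = v x - v (shift x)"
    unfolding in_HA_plus_def cohomologous_def cont_Zplus_def by blast
  have bound: "real p \<le> real n * birkhoff_sum shift c p x"
    if x: "x \<in> XA N A" and periodic: "(shift ^^ p) x = x" for x p
  proof -
    have "birkhoff_sum shift (\<lambda>y. real n * c y - 1 - g y) p x
        = birkhoff_sum shift (\<lambda>y. v y - v (shift y)) p x"
      unfolding birkhoff_sum_def by (intro sum.cong) (simp_all add: v funpow_shift_in_XA x)
    also have "\<dots> = 0" by (rule birkhoff_sum_coboundary_periodic[OF periodic])
    finally have "real n * birkhoff_sum shift c p x - real p - birkhoff_sum shift g p x = 0"
      by (simp add: birkhoff_sum_def sum_subtractf sum_distrib_left)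
    moreover have "birkhoff_sum shift g p x \<ge> 0"
      unfolding birkhoff_sum_def by (intro sum_nonneg g funpow_shift_in_XA x)
    ultimately show ?thesis by linarith
  qed
  show ?thesis
  proof (rule that[of "max n 1"])
    fix x p assume "x \<in> XA N A" "(shift ^^ p) x = x"
    then have "real p \<le> real n * birkhoff_sum shift c p x" by (rule bound)
    then show "real p \<le> real (max n 1) * birkhoff_sum shift c p x"
      by (cases "n = 0") (simp_all add: max_absorb1)
  qed simp
qed

section \<open>The one-sided suspension\<close>

lemma single_valued_rtrancl_join:
  assumes "single_valued S" "(p, q) \<in> (S \<union> S\<inverse>)\<^sup>*"
  shows "\<exists>w. (p, w) \<in> S\<^sup>* \<and> (q, w) \<in> S\<^sup>*"
  using assms(2)
proof (induction rule: rtrancl_induct)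
  case (step q q')
  then obtain w where w: "(p, w) \<in> S\<^sup>*" "(q, w) \<in> S\<^sup>*" by blast
  show ?case
  proof (cases "(q, q') \<in> S")
    case True
    then have "(q', w) \<in> S\<^sup>* \<or> (w, q') \<in> S\<^sup>*"
      using single_valued_confluent[OF assms(1) _ w(2)] by blast
    then show ?thesis using w(1) by (meson rtrancl_trans rtrancl_refl)
  next
    case False
    then have "(q', q) \<in> S" using step(2) by blast
    then show ?thesis using w by (meson converse_rtrancl_into_rtrancl)
  qed
qed blast

definition translate :: "real \<Rightarrow> 'a \<times> real \<Rightarrow> 'a \<times> real" where
  "translate t = (\<lambda>(x, r). (x, r + t))"

locale suspension =
  fixes N :: nat and A :: "nat \<Rightarrow> nat \<Rightarrow> nat" and l k b :: "(nat \<Rightarrow> nat) \<Rightarrow> real"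
  assumes triplet: "suspension_triplet N A l k b"
begin

abbreviation c :: "(nat \<Rightarrow> nat) \<Rightarrow> real" where
  "c \<equiv> \<lambda>x. l x - k x"

abbreviation "D \<equiv> susp_dom N A b"
abbreviation "step \<equiv> susp_step N A l k b"
abbreviation "rel \<equiv> susp_rel N A l k b"
abbreviation "cls p \<equiv> rel `` {p}"
abbreviation "flow \<equiv> susp_flow N A l k b"

lemma b_shift_le_k: "x \<in> XA N A \<Longrightarrow> b (shift x) \<le> k x"
  using triplet unfolding suspension_triplet_def by force

lemma susp_dom_iff: "(x, r) \<in> D \<longleftrightarrow> x \<in> XA N A \<and> b x \<le> r"
  by (simp add: susp_dom_def)

lemma susp_step_iff:
  "((x, r), q) \<in> step \<longleftrightarrow> (x, r) \<in> D \<and> l x \<le> r \<and> q = (shift x, r - c x)"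
  by (auto simp: susp_step_def)

lemma susp_step_in_dom:
  assumes "(p, q) \<in> step"
  shows "q \<in> D"
proof -
  obtain x r where "p = (x, r)" by fastforce
  with assms have "x \<in> XA N A" "l x \<le> r" "q = (shift x, r - c x)"
    by (auto simp: susp_step_iff susp_dom_iff)
  then show ?thesis using b_shift_le_k[of x] by (simp add: susp_dom_iff shift_in_XA)
qed

lemma rtrancl_susp_step_in_dom: "(p, q) \<in> step\<^sup>* \<Longrightarrow> p \<in> D \<Longrightarrow> q \<in> D"
  by (induction rule: rtrancl_induct) (auto dest: susp_step_in_dom)

lemma single_valued_susp_step: "single_valued step"
  by (auto simp: single_valued_def susp_step_def)

lemma rtrancl_susp_step_imp_iterate:
  assumes "((x, r), q) \<in> step\<^sup>*"
  shows "\<exists>n. q = ((shift ^^ n) x, r - birkhoff_sum shift c n x)"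
  using assms
proof (induction rule: rtrancl_induct)
  case base
  show ?case by (rule exI[of _ 0]) simp
next
  case (step y z)
  then obtain n where "y = ((shift ^^ n) x, r - birkhoff_sum shift c n x)" by blast
  with step.hyps(2) have "z = ((shift ^^ Suc n) x, r - birkhoff_sum shift c (Suc n) x)"
    by (simp add: susp_step_iff birkhoff_sum_Suc algebra_simps)
  then show ?case by blast
qed

lemma rtrancl_susp_stepI:
  assumes "(x, r) \<in> D" "\<And>i. i < n \<Longrightarrow> l ((shift ^^ i) x) \<le> r - birkhoff_sum shift c i x"
  shows "((x, r), ((shift ^^ n) x, r - birkhoff_sum shift c n x)) \<in> step\<^sup>*"
  using assms(2)
proof (induction n)
  case (Suc n)
  then have path: "((x, r), ((shift ^^ n) x, r - birkhoff_sum shift c n x)) \<in> step\<^sup>*"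
    by simp
  have "((shift ^^ n) x, r - birkhoff_sum shift c n x) \<in> D"
    using rtrancl_susp_step_in_dom[OF path assms(1)] .
  with Suc.prems have "(((shift ^^ n) x, r - birkhoff_sum shift c n x),
      ((shift ^^ Suc n) x, r - birkhoff_sum shift c (Suc n) x)) \<in> step"
    by (simp add: susp_step_iff birkhoff_sum_Suc algebra_simps)
  with path show ?case by (rule rtrancl_into_rtrancl)
qed simp

lemma equiv_susp_rel: "equiv D rel"
proof (rule equivI)
  show "refl_on D rel" by (auto simp: refl_on_def susp_rel_def)
  have "sym ((step \<union> step\<inverse>)\<^sup>*)" by (intro sym_rtrancl) (auto simp: sym_def)
  then show "sym rel" unfolding susp_rel_def sym_def by blast
  show "trans rel" unfolding susp_rel_def trans_def by (auto intro: rtrancl_trans)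
  show "rel \<subseteq> D \<times> D" by (auto simp: susp_rel_def)
qed

lemma susp_class_eq_iff: "p \<in> D \<Longrightarrow> q \<in> D \<Longrightarrow> cls p = cls q \<longleftrightarrow> (p, q) \<in> rel"
  using equiv_susp_rel by (simp add: equiv_class_eq_iff)

text \<open>Above this height the first \<open>n\<close> identifications starting from \<open>(x, r)\<close> are all
  admissible.\<close>

definition iterate_bound :: "nat \<Rightarrow> (nat \<Rightarrow> nat) \<Rightarrow> real" where
  "iterate_bound n x = (\<Sum>i<n. \<bar>l ((shift ^^ i) x) + birkhoff_sum shift c i x\<bar>)"

lemma iterate_bound_nonneg: "0 \<le> iterate_bound n x"
  by (simp add: iterate_bound_def sum_nonneg)

lemma susp_class_iterate:
  assumes "(x, r) \<in> D" "iterate_bound n x \<le> r"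
  shows "cls (x, r) = cls ((shift ^^ n) x, r - birkhoff_sum shift c n x)"
proof -
  have "l ((shift ^^ i) x) + birkhoff_sum shift c i x \<le> r" if "i < n" for i
  proof -
    have "l ((shift ^^ i) x) + birkhoff_sum shift c i x
        \<le> \<bar>l ((shift ^^ i) x) + birkhoff_sum shift c i x\<bar>" by (rule abs_ge_self)
    also have "\<dots> \<le> iterate_bound n x"
      unfolding iterate_bound_def by (rule member_le_sum) (use that in auto)
    finally show ?thesis using assms(2) by linarith
  qed
  then have path: "((x, r), ((shift ^^ n) x, r - birkhoff_sum shift c n x)) \<in> step\<^sup>*"
    by (intro rtrancl_susp_stepI[OF assms(1)]) (simp add: algebra_simps)
  then have "((x, r), ((shift ^^ n) x, r - birkhoff_sum shift c n x)) \<in> (step \<union> step\<inverse>)\<^sup>*"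
    by (rule rtrancl_mono[THEN subsetD, rotated]) blast
  with assms(1) rtrancl_susp_step_in_dom[OF path assms(1)] show ?thesis
    by (subst susp_class_eq_iff) (auto simp: susp_rel_def)
qed

text \<open>The identifying step is a partial function, so two points are identified iff both are
  pushed forward to a common point.\<close>

lemma susp_class_eq_imp_common_iterate:
  assumes "(x, r) \<in> D" "(y, s) \<in> D" "cls (x, r) = cls (y, s)"
  obtains m n where "(shift ^^ m) x = (shift ^^ n) y"
    and "r - birkhoff_sum shift c m x = s - birkhoff_sum shift c n y"
proof -
  have "((x, r), (y, s)) \<in> (step \<union> step\<inverse>)\<^sup>*"
    using assms susp_class_eq_iff by (auto simp: susp_rel_def)
  then obtain w where "((x, r), w) \<in> step\<^sup>*" "((y, s), w) \<in> step\<^sup>*"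
    using single_valued_rtrancl_join[OF single_valued_susp_step] by blast
  then obtain m n where "w = ((shift ^^ m) x, r - birkhoff_sum shift c m x)"
    and "w = ((shift ^^ n) y, s - birkhoff_sum shift c n y)"
    using rtrancl_susp_step_imp_iterate by meson
  then have "(shift ^^ m) x = (shift ^^ n) y"
    and "r - birkhoff_sum shift c m x = s - birkhoff_sum shift c n y" by simp_all
  then show ?thesis by (rule that)
qed

lemma translate_in_dom: "0 \<le> t \<Longrightarrow> p \<in> D \<Longrightarrow> translate t p \<in> D"
  by (cases p) (simp add: translate_def susp_dom_iff)

lemma susp_step_translate: "0 \<le> t \<Longrightarrow> (p, q) \<in> step \<Longrightarrow> (translate t p, translate t q) \<in> step"
  by (cases p) (auto simp: susp_step_iff translate_def susp_dom_iff)

lemma susp_rel_translate: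
  assumes "0 \<le> t" "(p, q) \<in> rel"
  shows "(translate t p, translate t q) \<in> rel"
proof -
  have "(p, q) \<in> (step \<union> step\<inverse>)\<^sup>*" using assms(2) by (simp add: susp_rel_def)
  then have "(translate t p, translate t q) \<in> (step \<union> step\<inverse>)\<^sup>*"
  proof (induction rule: rtrancl_induct)
    case (step y z)
    then have "(translate t y, translate t z) \<in> step \<union> step\<inverse>"
      using susp_step_translate[OF assms(1)] by blast
    with step.IH show ?case by (rule rtrancl_into_rtrancl)
  qed simp
  moreover have "p \<in> D" "q \<in> D" using assms(2) by (auto simp: susp_rel_def)
  ultimately show ?thesis using assms(1) by (simp add: susp_rel_def translate_in_dom)
qed

lemma flow_class:
  assumes "0 \<le> t" "p \<in> D"
  shows "flow t (cls p) = cls (translate t p)"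
proof -
  have "rel `` (translate t ` cls p) \<subseteq> cls (translate t p)"
  proof
    fix z assume "z \<in> rel `` (translate t ` cls p)"
    then obtain q where "(p, q) \<in> rel" "(translate t q, z) \<in> rel" by auto
    then show "z \<in> cls (translate t p)"
      using susp_rel_translate[OF assms(1)] equiv_susp_rel by (meson ImageI equivE singletonI transD)
  qed
  moreover have "cls (translate t p) \<subseteq> rel `` (translate t ` cls p)"
    using assms(2) equiv_susp_rel by (auto simp: equiv_def refl_on_def)
  ultimately show ?thesis
    unfolding susp_flow_def translate_def[symmetric] by blast
qed

lemma flow_class_pair: "0 \<le> t \<Longrightarrow> (x, r) \<in> D \<Longrightarrow> flow t (cls (x, r)) = cls (x, r + t)"
  using flow_class by (simp add: translate_def)

lemma susp_space_iff: "w \<in> susp_space N A l k b \<longleftrightarrow> (\<exists>p\<in>D. w = cls p)"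
  by (auto simp: susp_space_def quotient_def)

lemma flow_add:
  assumes "w \<in> susp_space N A l k b" "0 \<le> s" "0 \<le> t"
  shows "flow s (flow t w) = flow (s + t) w"
proof -
  obtain p where "p \<in> D" "w = cls p" using assms(1) susp_space_iff by blast
  with assms(2,3) show ?thesis
    by (cases p) (simp add: flow_class_pair susp_dom_iff ac_simps)
qed

lemma flow_zero: "w \<in> susp_space N A l k b \<Longrightarrow> flow 0 w = w"
  using susp_space_iff flow_class_pair by (metis add_0_right order_refl surj_pair)

lemma flow_mult_period:
  assumes "w \<in> susp_space N A l k b" "0 \<le> T" "flow T w = w"
  shows "flow (real n * T) w = w"
proof (induction n)
  case (Suc n)
  then show ?case
    using flow_add[OF assms(1), of "real n * T" T] assms(2,3) by (simp add: algebra_simps)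
qed (simp add: flow_zero[OF assms(1)])

definition flow_orbit :: "((nat \<Rightarrow> nat) \<times> real) set \<Rightarrow> ((nat \<Rightarrow> nat) \<times> real) set set" where
  "flow_orbit w = {flow t w | t. 0 \<le> t}"

lemma flow_orbit_flow:
  assumes "w \<in> susp_space N A l k b" "0 < T" "flow T w = w" "0 \<le> t"
  shows "flow_orbit (flow t w) = flow_orbit w"
proof
  show "flow_orbit (flow t w) \<subseteq> flow_orbit w"
    unfolding flow_orbit_def using assms(1,4) flow_add by auto
  show "flow_orbit w \<subseteq> flow_orbit (flow t w)"
  proof
    fix v assume "v \<in> flow_orbit w"
    then obtain s where s: "0 \<le> s" "v = flow s w" by (auto simp: flow_orbit_def)
    obtain n :: nat where n: "t \<le> real n * T"
      using reals_Archimedean3[OF assms(2)] by (meson less_imp_le)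
    have "flow (s + real n * T - t) (flow t w) = flow s (flow (real n * T) w)"
      using flow_add[OF assms(1)] n s assms(2,4) by (simp add: flow_add)
    also have "\<dots> = v" using flow_mult_period[OF assms(1)] assms(2,3) s by simp
    finally show "v \<in> flow_orbit (flow t w)"
      unfolding flow_orbit_def using n s by force
  qed
qed

section \<open>Periodic orbits of the suspension flow\<close>

definition periodic_points :: "(nat \<Rightarrow> nat) set" where
  "periodic_points = {x \<in> XA N A. x \<in> orbit shift x}"

definition period_length :: "(nat \<Rightarrow> nat) \<Rightarrow> real" where
  "period_length x = birkhoff_sum shift c (least_period shift x) x"

definition base_height :: "(nat \<Rightarrow> nat) \<Rightarrow> real" where
  "base_height x = \<bar>b x\<bar> + iterate_bound (least_period shift x) x"

definition base_point :: "(nat \<Rightarrow> nat) \<Rightarrow> ((nat \<Rightarrow> nat) \<times> real) set" where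
  "base_point x = cls (x, base_height x)"

lemma periodic_pointsD:
  assumes "x \<in> periodic_points"
  shows "x \<in> XA N A" "x \<in> orbit shift x" "(shift ^^ least_period shift x) x = x"
  using assms funpow_least_period by (auto simp: periodic_points_def)

lemma periodic_points_orbit:
  assumes "x \<in> periodic_points" "y \<in> orbit shift x"
  shows "y \<in> periodic_points" "least_period shift y = least_period shift x"
    "period_length y = period_length x"
proof -
  obtain i where y: "y = (shift ^^ i) x"
    using assms(2) unfolding orbit_altdef by blast
  note x = periodic_pointsD[OF assms(1)]
  show "y \<in> periodic_points"
    using self_in_orbit_trans[OF x(2) assms(2)] funpow_shift_in_XA[OF x(1)] y
    by (simp add: periodic_points_def)
  show p: "least_period shift y = least_period shift x"
    unfolding y by (rule least_period_funpow[OF x(2)])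
  show "period_length y = period_length x"
    unfolding period_length_def p unfolding y by (rule birkhoff_sum_periodic_shift[OF x(3)])
qed

lemma period_length_pos:
  assumes "x \<in> periodic_points"
  shows "0 < period_length x"
proof -
  have "order_unit N A c" using triplet by (simp add: suspension_triplet_def)
  then obtain M :: nat where M: "M > 0" and bound: "\<And>x p. x \<in> XA N A \<Longrightarrow> (shift ^^ p) x = x
      \<Longrightarrow> real p \<le> real M * birkhoff_sum shift c p x"
    using order_unit_birkhoff_sum_bound by blast
  have "real (least_period shift x) \<le> real M * period_length x"
    unfolding period_length_def using periodic_pointsD[OF assms] by (intro bound)
  moreover have "0 < real (least_period shift x)" by simp
  ultimately have "0 < real M * period_length x" by linarith
  then show ?thesis by (rule zero_less_mult_pos) (use M in simp)
qed

lemma base_height_le_imp_in_dom: "x \<in> XA N A \<Longrightarrow> base_height x \<le> r \<Longrightarrow> (x, r) \<in> D"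
  using iterate_bound_nonneg[of "least_period shift x" x]
  by (auto simp: base_height_def susp_dom_iff)

lemma flow_period_length:
  assumes "x \<in> periodic_points" "base_height x \<le> r"
  shows "flow (period_length x) (cls (x, r)) = cls (x, r)"
proof -
  note x = periodic_pointsD[OF assms(1)]
  have T: "0 < period_length x" by (rule period_length_pos[OF assms(1)])
  have "flow (period_length x) (cls (x, r)) = cls (x, r + period_length x)"
    using T base_height_le_imp_in_dom[OF x(1) assms(2)] by (simp add: flow_class_pair)
  also have "\<dots> = cls ((shift ^^ least_period shift x) x,
      r + period_length x - birkhoff_sum shift c (least_period shift x) x)"
    using T assms(2) base_height_le_imp_in_dom[OF x(1), of "r + period_length x"]
    by (intro susp_class_iterate) (auto simp: base_height_def)
  also have "\<dots> = cls (x, r)"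
    using x(3) by (simp add: period_length_def)
  finally show ?thesis .
qed

lemma period_length_le:
  assumes "x \<in> periodic_points" "base_height x \<le> r" "0 < t"
    and "flow t (cls (x, r)) = cls (x, r)"
  shows "period_length x \<le> t"
proof -
  let ?p = "least_period shift x"
  note x = periodic_pointsD[OF assms(1)]
  have dom: "(x, r + t) \<in> D" "(x, r) \<in> D"
    using assms(2,3) base_height_le_imp_in_dom[OF x(1)] by auto
  have "cls (x, r + t) = flow t (cls (x, r))"
    using assms(3) dom(2) by (simp add: flow_class_pair)
  also have "\<dots> = cls (x, r)" by (rule assms(4))
  finally have "cls (x, r + t) = cls (x, r)" .
  then obtain m n where eq: "(shift ^^ m) x = (shift ^^ n) x"
    and t: "r + t - birkhoff_sum shift c m x = r - birkhoff_sum shift c n x"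
    by (rule susp_class_eq_imp_common_iterate[OF dom])
  have shifted_sum: "birkhoff_sum shift c (i + j * ?p) x
      = birkhoff_sum shift c i x + real j * period_length x" for i j
    unfolding period_length_def by (rule birkhoff_sum_periodic_add[OF x(3)])
  have T: "0 < period_length x" by (rule period_length_pos[OF assms(1)])
  show ?thesis
  proof (cases "n \<le> m")
    case True
    obtain j where "m - n = ?p * j"
      using funpow_eq_imp_least_period_dvd[OF x(2) eq True] by (rule dvdE)
    then have "m = n + j * ?p" using True by (metis le_add_diff_inverse mult.commute)
    then have "t = real j * period_length x" using t shifted_sum by simp
    moreover from this assms(3) have "1 \<le> real j" by (cases j) auto
    ultimately show ?thesis using T by (simp add: mult_le_cancel_right1)
  next
    case False
    then have "m \<le> n" by simp
    then obtain j where "n - m = ?p * j"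
      using funpow_eq_imp_least_period_dvd[OF x(2) eq[symmetric]] by (blast elim: dvdE)
    then have "n = m + j * ?p" using \<open>m \<le> n\<close> by (metis le_add_diff_inverse mult.commute)
    then have "t = - real j * period_length x" using t shifted_sum by simp
    moreover have "0 \<le> real j * period_length x" using T by simp
    ultimately show ?thesis using assms(3) by linarith
  qed
qed

lemma flow_base_point:
  assumes "x \<in> periodic_points" "0 \<le> t"
  shows "flow t (base_point x) = cls (x, base_height x + t)"
  unfolding base_point_def
  by (rule flow_class_pair[OF assms(2) base_height_le_imp_in_dom[OF periodic_pointsD(1)[OF assms(1)] order_refl]])

lemma base_point_in_space:
  assumes "x \<in> periodic_points"
  shows "base_point x \<in> susp_space N A l k b"
  unfolding base_point_def susp_space_iff
  using base_height_le_imp_in_dom[OF periodic_pointsD(1)[OF assms] order_refl] by blast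

lemma flow_orbit_class:
  assumes "y \<in> periodic_points" "base_height y \<le> s"
  shows "flow_orbit (cls (y, s)) = flow_orbit (base_point y)"
proof -
  have "cls (y, s) = flow (s - base_height y) (base_point y)"
    using flow_base_point[OF assms(1), of "s - base_height y"] assms(2) by simp
  moreover have "flow_orbit (flow (s - base_height y) (base_point y)) = flow_orbit (base_point y)"
    using flow_period_length[OF assms(1) order_refl] assms(2)
    by (intro flow_orbit_flow[OF base_point_in_space[OF assms(1)] period_length_pos[OF assms(1)]])
      (simp_all add: base_point_def)
  ultimately show ?thesis by simp
qed

lemma self_in_flow_orbit: "w \<in> susp_space N A l k b \<Longrightarrow> w \<in> flow_orbit w"
  unfolding flow_orbit_def using flow_zero by force

lemma flow_orbit_base_point_in_periodic_orbits:
  assumes "x \<in> periodic_points"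
  shows "flow_orbit (base_point x) \<in> periodic_orbits N A l k b"
  unfolding periodic_orbits_def flow_orbit_def
  using base_point_in_space[OF assms] period_length_pos[OF assms]
    flow_period_length[OF assms order_refl] by (auto simp: base_point_def)

lemma flow_period_imp_eventually_periodic:
  assumes "(x, r) \<in> D" "0 < T" "cls (x, r + T) = cls (x, r)"
  obtains i where "(shift ^^ i) x \<in> periodic_points"
proof -
  have "(x, r + T) \<in> D" using assms(1,2) by (simp add: susp_dom_iff)
  then obtain m n where eq: "(shift ^^ m) x = (shift ^^ n) x"
    and sums: "r + T - birkhoff_sum shift c m x = r - birkhoff_sum shift c n x"
    using susp_class_eq_imp_common_iterate[OF _ assms(1,3)] by blast
  have "m \<noteq> n" using sums assms(2) by auto
  then show ?thesis
    using funpow_eq_imp_periodic[OF eq] funpow_shift_in_XA assms(1)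
    by (intro that[of "min m n"]) (simp add: periodic_points_def susp_dom_iff)
qed

lemma periodic_orbit_obtain_base_point:
  assumes "\<tau> \<in> periodic_orbits N A l k b"
  obtains y where "y \<in> periodic_points" "\<tau> = flow_orbit (base_point y)"
proof -
  obtain w T where w: "w \<in> susp_space N A l k b" "0 < T" "flow T w = w" "\<tau> = flow_orbit w"
    using assms unfolding periodic_orbits_def flow_orbit_def by blast
  obtain x r where xr: "(x, r) \<in> D" "w = cls (x, r)"
    using w(1) susp_space_iff by auto
  have w_eq: "w = cls (x, r + real n * T)" for n
    using flow_mult_period[OF w(1) _ w(3), of n] flow_class_pair[OF _ xr(1), of "real n * T"] w(2) xr(2)
    by simp
  obtain i where y: "(shift ^^ i) x \<in> periodic_points"
    using flow_period_imp_eventually_periodic[OF xr(1) w(2)] w_eq[of 1] xr(2) by auto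
  define y where "y = (shift ^^ i) x"
  obtain n :: nat where n: "\<bar>iterate_bound i x - r\<bar> + \<bar>base_height y + birkhoff_sum shift c i x - r\<bar>
      \<le> real n * T"
    using reals_Archimedean3[OF w(2)] by (meson less_imp_le)
  define R where "R = r + real n * T"
  have R: "iterate_bound i x \<le> R" "base_height y \<le> R - birkhoff_sum shift c i x"
    using n unfolding R_def by linarith+
  have "0 \<le> real n * T" using w(2) by simp
  then have "(x, R) \<in> D" using xr(1) unfolding R_def susp_dom_iff by linarith
  then have "w = cls (y, R - birkhoff_sum shift c i x)"
    using w_eq[of n] susp_class_iterate[OF _ R(1)] by (simp add: R_def y_def)
  then have "\<tau> = flow_orbit (base_point y)"
    using flow_orbit_class[OF y[folded y_def] R(2)] w(4) by simp
  with y show ?thesis unfolding y_def by (rule that)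
qed

lemma flow_orbit_base_point_eq_iff:
  assumes "x \<in> periodic_points" "y \<in> periodic_points"
  shows "flow_orbit (base_point x) = flow_orbit (base_point y) \<longleftrightarrow> y \<in> orbit shift x"
proof
  assume same: "flow_orbit (base_point x) = flow_orbit (base_point y)"
  have "base_point y \<in> flow_orbit (base_point x)"
    unfolding same by (rule self_in_flow_orbit[OF base_point_in_space[OF assms(2)]])
  then obtain t where t: "0 \<le> t" "base_point y = cls (x, base_height x + t)"
    unfolding flow_orbit_def using flow_base_point[OF assms(1)] by auto
  have dom: "(y, base_height y) \<in> D" "(x, base_height x + t) \<in> D"
    using base_height_le_imp_in_dom periodic_pointsD(1) assms t(1) by auto
  obtain i j where ij: "(shift ^^ i) y = (shift ^^ j) x"
    using susp_class_eq_imp_common_iterate[OF dom] t(2) unfolding base_point_def by metis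
  let ?p = "least_period shift y"
  have "i \<le> i * ?p" by (simp add: Suc_le_eq)
  have "y = (shift ^^ (i * ?p)) y"
    using funpow_mult_fixpoint[OF periodic_pointsD(3)[OF assms(2)]] by simp
  also have "\<dots> = (shift ^^ (i * ?p - i)) ((shift ^^ j) x)"
    using \<open>i \<le> i * ?p\<close> funpow_add_apply[where f=shift and m=i and n="i * ?p - i"] ij by simp
  finally have "y = (shift ^^ (i * ?p - i)) ((shift ^^ j) x)" .
  moreover have "(shift ^^ (i * ?p - i)) ((shift ^^ j) x) \<in> orbit shift x"
    by (intro funpow_in_orbit periodic_pointsD(2)[OF assms(1)])
  ultimately show "y \<in> orbit shift x" by (simp only:)
next
  assume "y \<in> orbit shift x"
  then obtain i where y: "y = (shift ^^ i) x" unfolding orbit_altdef by blast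
  define R where "R = \<bar>base_height x\<bar> + iterate_bound i x + \<bar>base_height y + birkhoff_sum shift c i x\<bar>"
  have R: "base_height x \<le> R" "iterate_bound i x \<le> R" "base_height y \<le> R - birkhoff_sum shift c i x"
    unfolding R_def using iterate_bound_nonneg[of i x] by linarith+
  have "cls (x, R) = cls (y, R - birkhoff_sum shift c i x)"
    unfolding y using base_height_le_imp_in_dom[OF periodic_pointsD(1)[OF assms(1)] R(1)]
    by (rule susp_class_iterate[OF _ R(2)])
  then show "flow_orbit (base_point x) = flow_orbit (base_point y)"
    using flow_orbit_class[OF assms(1) R(1)] flow_orbit_class[OF assms(2) R(3)] by simp
qed

lemma orbit_length_base_point:
  assumes "x \<in> periodic_points"
  shows "orbit_length N A l k b (flow_orbit (base_point x)) = period_length x"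
proof -
  define v where "v = (SOME v. v \<in> flow_orbit (base_point x))"
  have "base_point x \<in> flow_orbit (base_point x)"
    by (rule self_in_flow_orbit[OF base_point_in_space[OF assms]])
  then have "v \<in> flow_orbit (base_point x)" unfolding v_def by (rule someI)
  then obtain t where t: "0 \<le> t" "v = cls (x, base_height x + t)"
    unfolding flow_orbit_def using flow_base_point[OF assms] by auto
  have "Inf {s. 0 < s \<and> flow s v = v} = period_length x"
  proof (rule cInf_eq_minimum)
    show "period_length x \<in> {s. 0 < s \<and> flow s v = v}"
      using flow_period_length[OF assms] period_length_pos[OF assms] t by simp
    show "period_length x \<le> s" if "s \<in> {s. 0 < s \<and> flow s v = v}" for s
      using period_length_le[OF assms, of "base_height x + t" s] that t by simp
  qed
  then show ?thesis unfolding orbit_length_def v_def by (simp add: Let_def)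
qed

section \<open>The zeta function\<close>

text \<open>On \<open>Per N A n\<close> the order unit bound gives \<open>c\<^sub>n \<ge> n / M\<close>, and \<open>card (Per N A n) \<le> N ^ n\<close>,
  so for \<open>Re s > M ln N\<close> the series is dominated by a convergent geometric series.\<close>

context
  fixes M :: nat and s :: complex
  assumes M_pos: "0 < M"
    and M_bound: "\<And>x p. x \<in> XA N A \<Longrightarrow> (shift ^^ p) x = x \<Longrightarrow> real p \<le> real M * birkhoff_sum shift c p x"
    and N_gt_1: "1 < N"
    and Re_s_gt: "real M * ln (real N) < Re s"
begin

definition zeta_term :: "nat \<times> (nat \<Rightarrow> nat) \<Rightarrow> complex" where
  "zeta_term = (\<lambda>(n, x). (1 / of_nat (Suc n)) * exp (- s * of_real (birkhoff_sum shift c (Suc n) x)))"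

definition periodic_index :: "(nat \<times> (nat \<Rightarrow> nat)) set" where
  "periodic_index = Sigma UNIV (\<lambda>n. Per N A (Suc n))"

lemma Re_s_pos: "0 < Re s"
proof -
  have "0 < real M * ln (real N)" using M_pos N_gt_1 by simp
  with Re_s_gt show ?thesis by linarith
qed

lemma N_mult_decay_lt_1: "real N * exp (- Re s / real M) < 1"
proof -
  have "ln (real N) < Re s / real M" using Re_s_gt M_pos by (simp add: field_simps)
  then have "exp (ln (real N)) < exp (Re s / real M)" by simp
  then have "real N < exp (Re s / real M)" using N_gt_1 by simp
  then show ?thesis by (simp add: exp_minus field_simps)
qed

lemma norm_zeta_term_le:
  assumes "x \<in> Per N A (Suc n)"
  shows "norm (zeta_term (n, x)) \<le> exp (- Re s / real M) ^ Suc n"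
proof -
  have "real (Suc n) \<le> real M * birkhoff_sum shift c (Suc n) x"
    using assms by (intro M_bound) (auto simp: Per_def simp del: funpow.simps)
  then have "real (Suc n) / real M \<le> birkhoff_sum shift c (Suc n) x"
    using M_pos by (simp add: field_simps)
  then have "Re s * (real (Suc n) / real M) \<le> Re s * birkhoff_sum shift c (Suc n) x"
    using Re_s_pos by (intro mult_left_mono) simp_all
  then have "Re (- s * of_real (birkhoff_sum shift c (Suc n) x)) \<le> real (Suc n) * (- Re s / real M)"
    by (simp add: ac_simps)
  have "norm (zeta_term (n, x))
      = (1 / real (Suc n)) * exp (Re (- s * of_real (birkhoff_sum shift c (Suc n) x)))"
    unfolding zeta_term_def by (simp add: norm_mult norm_divide del: of_nat_Suc)
  also have "\<dots> \<le> 1 * exp (real (Suc n) * (- Re s / real M))"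
    by (intro mult_mono) (use \<open>Re _ \<le> _\<close> in auto)
  also have "\<dots> = exp (- Re s / real M) ^ Suc n"
    by (simp only: mult_1 exp_of_nat_mult)
  finally show ?thesis .
qed

lemma zeta_term_abs_summable: "(\<lambda>y. norm (zeta_term y)) summable_on periodic_index"
  unfolding periodic_index_def
proof (rule iffD2[OF Infinite_Sum.abs_summable_on_Sigma_iff], intro conjI ballI)
  have finite: "finite (Per N A (Suc n))" for n by (simp add: Per_finite_card)
  then show "(\<lambda>x. norm (zeta_term (n, x))) summable_on Per N A (Suc n)" for n by simp
  define q where "q = exp (- Re s / real M)"
  define a where "a n = (\<Sum>x\<in>Per N A (Suc n). norm (zeta_term (n, x)))" for n
  have "a n \<le> real (card (Per N A (Suc n))) * q ^ Suc n" for n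
    unfolding a_def q_def by (rule sum_bounded_above) (rule norm_zeta_term_le)
  also have "\<dots> n \<le> real (N ^ Suc n) * q ^ Suc n" for n
    using Per_finite_card(2)[of "Suc n" N A] by (intro mult_right_mono of_nat_mono) (simp_all add: q_def)
  also have "\<dots> n = (real N * q) ^ Suc n" for n
    by (simp add: power_mult_distrib)
  finally have a_le: "a n \<le> (real N * q) ^ Suc n" for n .
  have a_nonneg: "0 \<le> a n" for n
    unfolding a_def by (simp add: sum_nonneg)
  have "summable (\<lambda>n. (real N * q) ^ Suc n)"
    using N_mult_decay_lt_1 by (simp add: q_def summable_geometric)
  then have "summable (\<lambda>n. norm (a n))"
    by (rule summable_comparison_test') (use a_le a_nonneg in simp)
  then show "(\<lambda>n. norm (\<Sum>\<^sub>\<infinity>x\<in>Per N A (Suc n). norm (zeta_term (n, x)))) summable_on UNIV"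
    using finite summable_on_UNIV_nonneg_real_iff[of "\<lambda>n. norm (a n)"] by (simp add: a_def)
qed

definition log_zeta :: complex where
  "log_zeta = infsum zeta_term periodic_index"

lemma has_sum_zeta_term: "(zeta_term has_sum log_zeta) periodic_index"
  unfolding log_zeta_def using abs_summable_summable[OF zeta_term_abs_summable] by simp

lemma zeta_series_sums:
  "(\<lambda>n. (1 / of_nat (Suc n)) *
      (\<Sum>x\<in>Per N A (Suc n). exp (- s * of_real (birkhoff_sum shift c (Suc n) x)))) sums log_zeta"
proof -
  have "((\<lambda>n. \<Sum>x\<in>Per N A (Suc n). zeta_term (n, x)) has_sum log_zeta) UNIV"
    using has_sum_zeta_term unfolding periodic_index_def
    by (rule has_sum_SigmaD) (simp add: Per_finite_card)
  then show ?thesis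
    by (simp add: has_sum_imp_sums zeta_term_def sum_distrib_left)
qed

text \<open>The pair \<open>(x, j)\<close> stands for the \<open>(j + 1)\<close>-fold traversal of the shift orbit of \<open>x\<close>,
  i.e. for \<open>x\<close> as a point of \<open>Per N A ((j + 1) * p)\<close>, where \<open>p\<close> is its least period.\<close>

definition zeta_term_repeat :: "(nat \<Rightarrow> nat) \<times> nat \<Rightarrow> complex" where
  "zeta_term_repeat = (\<lambda>(x, j). zeta_term (Suc j * least_period shift x - 1, x))"

lemma has_sum_zeta_term_repeat: "(zeta_term_repeat has_sum log_zeta) (periodic_points \<times> UNIV)"
proof -
  let ?repeat = "\<lambda>(x, j). (Suc j * least_period shift x - 1, x)"
  let ?primitive = "\<lambda>(n, x). (x, Suc n div least_period shift x - 1)"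
  have "(zeta_term_repeat has_sum log_zeta) (periodic_points \<times> UNIV) \<longleftrightarrow>
      (zeta_term has_sum log_zeta) periodic_index"
  proof (rule has_sum_reindex_bij_witness[where i = ?primitive and j = ?repeat])
    fix a :: "(nat \<Rightarrow> nat) \<times> nat" assume "a \<in> periodic_points \<times> UNIV"
    then obtain x j where a: "a = (x, j)" and x: "x \<in> periodic_points" by blast
    note periodic = periodic_pointsD[OF x]
    have pos: "0 < least_period shift x" by simp
    then show "?primitive (?repeat a) = a" using a by simp
    have "Suc (Suc j * least_period shift x - 1) = Suc j * least_period shift x"
      using pos by simp
    then show "?repeat a \<in> periodic_index"
      using funpow_mult_fixpoint[OF periodic(3), of "Suc j"] periodic(1)
      by (simp add: a periodic_index_def Per_def del: mult_Suc funpow.simps)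
    show "zeta_term (?repeat a) = zeta_term_repeat a" by (simp add: a zeta_term_repeat_def)
  next
    fix a assume "a \<in> periodic_index"
    then obtain n x where a: "a = (n, x)" and x: "x \<in> XA N A" and periodic: "(shift ^^ Suc n) x = x"
      by (auto simp: periodic_index_def Per_def simp del: funpow.simps)
    have "x \<in> orbit shift x" using periodic by (rule self_in_orbitI) simp
    with x show "?primitive a \<in> periodic_points \<times> UNIV"
      by (simp add: a periodic_points_def)
    obtain q where q: "Suc n = least_period shift x * q"
      using least_period_dvd[OF periodic] by (rule dvdE)
    then have "0 < q" by (cases q) auto
    then have "Suc (Suc n div least_period shift x - 1) * least_period shift x = Suc n"
      using q by (simp add: Suc_diff_1)
    then show "?repeat (?primitive a) = a" by (simp add: a)
  qed simp
  then show ?thesis using has_sum_zeta_term by simp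
qed

definition orbit_fibre :: "((nat \<Rightarrow> nat) \<times> real) set set \<Rightarrow> ((nat \<Rightarrow> nat) \<times> nat) set" where
  "orbit_fibre \<tau> = {(x, j). x \<in> periodic_points \<and> flow_orbit (base_point x) = \<tau>}"

lemma has_sum_zeta_term_orbits:
  "((\<lambda>a. zeta_term_repeat (snd a)) has_sum log_zeta) (Sigma (periodic_orbits N A l k b) orbit_fibre)"
proof -
  let ?label = "\<lambda>(x, j). (flow_orbit (base_point x), (x, j))"
  have "((\<lambda>a. zeta_term_repeat (snd a)) has_sum log_zeta) (Sigma (periodic_orbits N A l k b) orbit_fibre)
      \<longleftrightarrow> (zeta_term_repeat has_sum log_zeta) (periodic_points \<times> UNIV)"
    by (rule has_sum_reindex_bij_witness[where i = ?label and j = snd])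
      (auto simp: orbit_fibre_def flow_orbit_base_point_in_periodic_orbits)
  then show ?thesis using has_sum_zeta_term_repeat by simp
qed

lemma norm_exp_minus_lt_1: "0 < t \<Longrightarrow> norm (exp (- s * of_real t)) < 1"
  using Re_s_pos by simp

lemma zeta_term_repeat_orbit:
  assumes "x0 \<in> periodic_points" "x \<in> orbit shift x0"
  shows "zeta_term_repeat (x, j) =
    (1 / of_nat (least_period shift x0)) *
      (exp (- s * of_real (period_length x0)) ^ Suc j / of_nat (Suc j))"
proof -
  note same = periodic_points_orbit[OF assms]
  let ?p = "least_period shift x"
  have "Suc (Suc j * ?p - 1) = Suc j * ?p" by simp
  moreover have "birkhoff_sum shift c (Suc j * ?p) x = real (Suc j) * birkhoff_sum shift c ?p x"
    by (rule birkhoff_sum_periodic_mult[OF periodic_pointsD(3)[OF same(1)]])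
  then have "birkhoff_sum shift c (Suc j * ?p) x = real (Suc j) * period_length x0"
    using same(3) by (simp only: period_length_def)
  moreover have "exp (- s * of_real (real (Suc j) * period_length x0))
      = exp (- s * of_real (period_length x0)) ^ Suc j"
    by (metis exp_of_nat_mult mult.left_commute of_real_mult of_real_of_nat_eq)
  ultimately show ?thesis
    unfolding zeta_term_repeat_def zeta_term_def using same(2)
    by (simp add: field_simps del: of_nat_Suc mult_Suc power_Suc)
qed

lemma has_sum_orbit_fibre:
  assumes "\<tau> \<in> periodic_orbits N A l k b"
  shows "(zeta_term_repeat has_sum - ln (1 - exp (- s * of_real (orbit_length N A l k b \<tau>))))
    (orbit_fibre \<tau>)"
proof -
  obtain x0 where x0: "x0 \<in> periodic_points" and \<tau>: "\<tau> = flow_orbit (base_point x0)"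
    using periodic_orbit_obtain_base_point[OF assms] .
  define z where "z = exp (- s * of_real (period_length x0))"
  define p where "p = least_period shift x0"
  have "norm z < 1"
    unfolding z_def by (rule norm_exp_minus_lt_1[OF period_length_pos[OF x0]])
  have fibre: "orbit_fibre \<tau> = orbit shift x0 \<times> UNIV"
    using flow_orbit_base_point_eq_iff[OF x0] periodic_points_orbit(1)[OF x0]
    by (auto simp: orbit_fibre_def \<tau>)
  have "((\<lambda>j. zeta_term_repeat (x, j)) has_sum (1 / of_nat p) * - ln (1 - z)) UNIV"
    if "x \<in> orbit shift x0" for x
    using has_sum_cmult_right[OF has_sum_minus_ln_one_minus[OF \<open>norm z < 1\<close>], of "1 / of_nat p"]
    by (simp add: zeta_term_repeat_orbit[OF x0 that] z_def p_def)
  moreover have "((\<lambda>x. (1 / of_nat p) * - ln (1 - z)) has_sum - ln (1 - z)) (orbit shift x0)"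
    using card_orbit_eq_least_period[OF periodic_pointsD(2)[OF x0]]
      finite_orbit[OF periodic_pointsD(2)[OF x0]]
    by (intro has_sum_finiteI) (simp_all add: p_def)
  moreover have "zeta_term_repeat summable_on orbit shift x0 \<times> UNIV"
    using has_sum_zeta_term_repeat periodic_points_orbit(1)[OF x0]
    by (blast intro: summable_on_subset has_sum_imp_summable)
  ultimately have "(zeta_term_repeat has_sum - ln (1 - z)) (orbit shift x0 \<times> UNIV)"
    by (intro has_sum_SigmaI) auto
  then show ?thesis
    unfolding fibre unfolding \<tau> orbit_length_base_point[OF x0] z_def .
qed

lemma has_sum_log_euler_factors:
  "((\<lambda>\<tau>. - ln (1 - exp (- s * of_real (orbit_length N A l k b \<tau>)))) has_sum log_zeta)
    (periodic_orbits N A l k b)"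
  using has_sum_zeta_term_orbits by (rule has_sum_SigmaD) (use has_sum_orbit_fibre in auto)

lemma euler_product_tendsto:
  "((\<lambda>F. \<Prod>\<tau>\<in>F. inverse (1 - exp (- s * of_real (orbit_length N A l k b \<tau>)))) \<longlongrightarrow> exp log_zeta)
    (finite_subsets_at_top (periodic_orbits N A l k b))"
proof -
  let ?factor = "\<lambda>\<tau>. - ln (1 - exp (- s * of_real (orbit_length N A l k b \<tau>)))"
  have "((\<lambda>F. exp (sum ?factor F)) \<longlongrightarrow> exp log_zeta) (finite_subsets_at_top (periodic_orbits N A l k b))"
    using has_sum_log_euler_factors unfolding has_sum_def by (rule tendsto_exp)
  moreover have "exp (- ln (1 - exp (- s * of_real (orbit_length N A l k b \<tau>))))
      = inverse (1 - exp (- s * of_real (orbit_length N A l k b \<tau>)))"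
    if \<tau>: "\<tau> \<in> periodic_orbits N A l k b" for \<tau>
  proof -
    obtain x where "x \<in> periodic_points" "\<tau> = flow_orbit (base_point x)"
      using periodic_orbit_obtain_base_point[OF \<tau>] .
    then have "0 < orbit_length N A l k b \<tau>"
      using orbit_length_base_point period_length_pos by simp
    then show ?thesis by (intro exp_minus_ln_one_minus norm_exp_minus_lt_1)
  qed
  then have "\<forall>\<^sub>F F in finite_subsets_at_top (periodic_orbits N A l k b).
      exp (sum ?factor F) = (\<Prod>\<tau>\<in>F. inverse (1 - exp (- s * of_real (orbit_length N A l k b \<tau>))))"
    by (intro eventually_finite_subsets_at_top_weakI) (auto simp: exp_sum intro!: prod.cong)
  ultimately show ?thesis by (rule Lim_transform_eventually)
qed

end

end

theorem proposition4p2: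
  fixes N :: nat and A :: "nat \<Rightarrow> nat \<Rightarrow> nat"
    and l k b :: "(nat \<Rightarrow> nat) \<Rightarrow> real"
  assumes "N > 1"
    and "zero_one_matrix N A"
    and "irreducible_matrix N A"
    and "\<not> permutation_matrix N A"
    and "suspension_triplet N A l k b"
  shows "\<exists>s0::real. \<forall>s::complex. Re s > s0 \<longrightarrow>
    (\<exists>L::complex.
       (\<lambda>n. (1 / of_nat (Suc n)) *
          (\<Sum>x\<in>Per N A (Suc n).
             exp (- s * of_real (\<Sum>i<Suc n. l ((shift ^^ i) x) - k ((shift ^^ i) x))))) sums L
     \<and> ((\<lambda>F. \<Prod>\<tau>\<in>F. inverse (1 - exp (- s * of_real (orbit_length N A l k b \<tau>))))
          \<longlongrightarrow> exp L) (finite_subsets_at_top (periodic_orbits N A l k b)))"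
proof -
  interpret suspension N A l k b by unfold_locales (rule assms(5))
  have "order_unit N A c" using assms(5) by (simp add: suspension_triplet_def)
  then obtain M :: nat where M: "0 < M"
    "\<And>x p. x \<in> XA N A \<Longrightarrow> (shift ^^ p) x = x \<Longrightarrow> real p \<le> real M * birkhoff_sum shift c p x"
    using order_unit_birkhoff_sum_bound by blast
  show ?thesis
    using zeta_series_sums[OF M assms(1)] euler_product_tendsto[OF M assms(1)]
    unfolding birkhoff_sum_def by (intro exI[of _ "real M * ln (real N)"]) blast
qed

end
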